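(* Let $G$ be a graph with adjacency matrix $A$ whose degrees $d=A\mathbf 1$ are all positive, let $e=(i,j)$, $i\ne j$, $a_{ij}>0$, be any edge, and let $r>0$. Then the regularized centrality score satisfies $c_r(e)\ge 0$.
   Context: Graphs are undirected and possibly weighted on vertex set $\{1,\dots,n\}$, with symmetric nonnegative adjacency matrix $A=(a_{k\ell})$; $D=\mathrm{diag}(d)$, $\|d\|_1=\sum_kd_k$, $D^{\pm1/2}=\mathrm{diag}(d_k^{\pm1/2})$; $e_k$ is the $k$-th column of the identity and $\mathbf 1$ the all-ones vector. For $r>0$ and a symmetric nonnegative matrix $B$ with $B\mathbf 1=d$, the regularized Kemeny constant is $K_r(B)=\operatorname{Tr}\Big(\big((1+r)I-D^{-1/2}BD^{-1/2}+\tfrac{1}{\|d\|_1}D^{1/2}\mathbf 1\mathbf 1^TD^{1/2}\big)^{-1}\Big)-(1+r)^{-1}$. With $v=e_i-e_j$ and $\widehat A=A+a_{ij}vv^T$ (deleting edge $e$ and adding loops of weight $a_{ij}$ at $i$ and $j$; note $\widehat A\mathbf 1=d$), the regularized Kemeny-based centrality score is $c_r(e)=K_r(\widehat A)-K_r(A)$. *)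

theory Defs
  imports "HOL-Analysis.Analysis"
begin

definition deg :: "real^'n^'n \<Rightarrow> real^'n" where
  "deg B = B *v (\<chi> k. 1)"

definition diagm :: "('n::finite \<Rightarrow> real) \<Rightarrow> real^'n^'n" where
  "diagm f = (\<chi> k l. if k = l then f k else 0)"

definition outer :: "real^'n \<Rightarrow> real^'n \<Rightarrow> real^'n^'n" where
  "outer x y = (\<chi> k l. x $ k * y $ l)"

definition kemeny_reg :: "real \<Rightarrow> real^'n^'n \<Rightarrow> real" where
  "kemeny_reg r B =
     (let d = deg B;
          s = (\<Sum>k\<in>UNIV. \<bar>d $ k\<bar>);
          Dm = diagm (\<lambda>k. 1 / sqrt (d $ k));
          sq = (\<chi> k. sqrt (d $ k));
          M = (1 + r) *\<^sub>R mat 1 - Dm ** B ** Dm + (1 / s) *\<^sub>R outer sq sq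
      in trace (matrix_inv M) - 1 / (1 + r))"

definition edge_removed :: "real^'n^'n \<Rightarrow> 'n \<Rightarrow> 'n \<Rightarrow> real^'n^'n" where
  "edge_removed A i j =
     (let v = axis i (1::real) - axis j 1 in A + (A $ i $ j) *\<^sub>R outer v v)"

definition centrality_reg :: "real \<Rightarrow> real^'n^'n \<Rightarrow> 'n \<Rightarrow> 'n \<Rightarrow> real" where
  "centrality_reg r A i j = kemeny_reg r (edge_removed A i j) - kemeny_reg r A"

end

theory Submission imports Defs begin

text \<open>Let \<open>M\<close> be the matrix whose inverse defines \<open>K\<^sub>r(A)\<close>. Since \<open>\<widehat>A\<close> has the same
degrees as \<open>A\<close>, the matrix for \<open>\<widehat>A\<close> is the rank-one downdate \<open>M - a w w\<^sup>T\<close> with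
\<open>w = D^(-1/2) (e\<^sub>i - e\<^sub>j)\<close> and \<open>a = a\<^sub>i\<^sub>j\<close>. Both matrices are symmetric with
\<open>x\<^sup>T M x \<ge> r x\<^sup>T x\<close>, because the normalized adjacency matrix has quadratic form at most
\<open>x\<^sup>T x\<close>. For \<open>P = M\<^sup>-\<^sup>1\<close> and \<open>Q = (M - a w w\<^sup>T)\<^sup>-\<^sup>1\<close> one has \<open>Q - P = a P w w\<^sup>T Q\<close>,
hence \<open>Q w = (1 + a t) P w\<close> with \<open>t = w\<^sup>T Q w \<ge> 0\<close>, and
\<open>tr Q - tr P = a (1 + a t) |P w|\<^sup>2 \<ge> 0\<close>.\<close>

lemma transpose_eq_self_entry:
  fixes B :: "'a^'n^'n"
  assumes "transpose B = B"
  shows "B $ l $ k = B $ k $ l"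
  by (metis assms transpose_def vec_lambda_beta)

lemma inner_matrix_vector_eq_double_sum:
  fixes M :: "real^'n^'n"
  shows "x \<bullet> (M *v x) = (\<Sum>k\<in>UNIV. \<Sum>l\<in>UNIV. x$k * M$k$l * x$l)"
  by (simp add: inner_vec_def matrix_vector_mult_def sum_distrib_left mult.assoc)

lemma diagm_sandwich_entry:
  "(diagm f ** X ** diagm f) $ k $ l = f k * X$k$l * f l"
  by (simp add: diagm_def matrix_matrix_mult_def if_distrib if_distribR cong: if_cong)

lemma diagm_mult_vector_component: "(diagm f *v v) $ k = f k * v $ k"
  by (simp add: diagm_def matrix_vector_mult_def if_distrib if_distribR cong: if_cong)

lemma outer_self_mult_vector:
  fixes w :: "real^'n"
  shows "outer w w *v z = (w \<bullet> z) *\<^sub>R w"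
  by (simp add: outer_def vec_eq_iff matrix_vector_mult_def inner_vec_def sum_distrib_left mult_ac)

lemma trace_mult_outer_self:
  fixes X :: "real^'n^'n"
  shows "trace (X ** outer w w) = w \<bullet> (X *v w)"
  by (simp add: trace_def matrix_matrix_mult_def outer_def inner_vec_def matrix_vector_mult_def
      sum_distrib_left mult_ac)

lemma trace_scaleR: "trace (c *\<^sub>R (X::real^'n^'n)) = c * trace X"
  by (simp add: trace_def sum_distrib_left)

lemma matrix_diff_ldistrib: "(X::real^'n^'n) ** (B - C) = X ** B - X ** C"
  by (simp add: vec_eq_iff matrix_matrix_mult_def sum_subtractf algebra_simps)

lemma matrix_diff_rdistrib: "((B::real^'n^'n) - C) ** X = B ** X - C ** X"
  by (simp add: vec_eq_iff matrix_matrix_mult_def sum_subtractf algebra_simps)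

lemma matrix_inv_right:
  fixes M :: "real^'n^'n"
  assumes "invertible M"
  shows "M ** matrix_inv M = mat 1"
  using someI_ex[OF assms[unfolded invertible_def]] unfolding matrix_inv_def by auto

lemma matrix_inv_left:
  fixes M :: "real^'n^'n"
  assumes "invertible M"
  shows "matrix_inv M ** M = mat 1"
  using someI_ex[OF assms[unfolded invertible_def]] unfolding matrix_inv_def by auto

lemma transpose_matrix_inv_symmetric:
  fixes M :: "real^'n^'n"
  assumes "invertible M" "transpose M = M"
  shows "transpose (matrix_inv M) = matrix_inv M"
proof -
  let ?P = "matrix_inv M"
  have "transpose ?P ** M = mat 1"
    by (metis assms(2) matrix_inv_right[OF assms(1)] matrix_transpose_mul transpose_mat)
  then have "transpose ?P = transpose ?P ** (M ** ?P)"
    using matrix_inv_right[OF assms(1)] by simp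
  also have "\<dots> = ?P" by (simp add: matrix_mul_assoc \<open>transpose ?P ** M = mat 1\<close>)
  finally show ?thesis .
qed

lemma invertible_if_quadratic_form_ge:
  fixes M :: "real^'n^'n"
  assumes "\<And>x. x \<bullet> (M *v x) \<ge> r * (x \<bullet> x)" "r > 0"
  shows "invertible M"
proof -
  have "inj ((*v) M)"
  proof (rule injI)
    fix x y assume "M *v x = M *v y"
    then have "M *v (x - y) = 0" by (simp add: matrix_vector_mult_diff_distrib)
    then have "r * ((x - y) \<bullet> (x - y)) \<le> 0" using assms(1)[of "x - y"] by simp
    then have "(x - y) \<bullet> (x - y) \<le> 0" using assms(2) by (simp add: mult_le_0_iff)
    then show "x = y" by (metis inner_eq_zero_iff eq_iff_diff_eq_0 inner_ge_zero order_antisym)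
  qed
  then show ?thesis using matrix_left_invertible_injective invertible_left_inverse by blast
qed

lemma inner_matrix_inv_nonneg:
  fixes N :: "real^'n^'n"
  assumes "invertible N" "\<And>x. x \<bullet> (N *v x) \<ge> 0"
  shows "w \<bullet> (matrix_inv N *v w) \<ge> 0"
proof -
  let ?y = "matrix_inv N *v w"
  have "N *v ?y = w" by (simp add: matrix_vector_mul_assoc matrix_inv_right[OF assms(1)])
  then show ?thesis using assms(2)[of ?y] by (simp add: inner_commute)
qed

lemma matrix_inv_diff:
  fixes M N :: "real^'n^'n"
  assumes M: "invertible M" and N: "invertible N"
  shows "matrix_inv N - matrix_inv M = matrix_inv M ** (M - N) ** matrix_inv N"
    and "matrix_inv N - matrix_inv M = matrix_inv N ** (M - N) ** matrix_inv M"
proof -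
  have "matrix_inv M ** M ** matrix_inv N = matrix_inv N"
    and "matrix_inv N ** M ** matrix_inv M = matrix_inv N"
    and "matrix_inv M ** N ** matrix_inv N = matrix_inv M"
    and "matrix_inv N ** N ** matrix_inv M = matrix_inv M"
    by (simp_all add: matrix_inv_left[OF M] matrix_inv_left[OF N] matrix_inv_right[OF M]
        matrix_inv_right[OF N] flip: matrix_mul_assoc)
  then show "matrix_inv N - matrix_inv M = matrix_inv M ** (M - N) ** matrix_inv N"
    and "matrix_inv N - matrix_inv M = matrix_inv N ** (M - N) ** matrix_inv M"
    by (simp_all add: matrix_diff_ldistrib matrix_diff_rdistrib)
qed

lemma trace_matrix_inv_rank_one_downdate:
  fixes M :: "real^'n^'n" and a :: real and w :: "real^'n"
  defines "P \<equiv> matrix_inv M" and "Q \<equiv> matrix_inv (M - a *\<^sub>R outer w w)"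
  assumes sym: "transpose M = M"
    and M: "invertible M" and N: "invertible (M - a *\<^sub>R outer w w)"
  shows "trace Q - trace P = a * (1 + a * (w \<bullet> (Q *v w))) * ((P *v w) \<bullet> (P *v w))"
proof -
  have diff: "Q - P = a *\<^sub>R (P ** outer w w ** Q)" "Q - P = a *\<^sub>R (Q ** outer w w ** P)"
    using matrix_inv_diff[OF M N] unfolding P_def Q_def
    by (simp_all add: matrix_scalar_ac scalar_matrix_assoc)
  have "Q *v w - P *v w = (Q - P) *v w" by (simp add: matrix_vector_mult_diff_rdistrib)
  also have "\<dots> = a *\<^sub>R (P *v (outer w w *v (Q *v w)))"
    by (simp only: diff(1) scaleR_matrix_vector_assoc matrix_vector_mul_assoc matrix_mul_assoc)
  finally have Qw: "Q *v w = (1 + a * (w \<bullet> (Q *v w))) *\<^sub>R (P *v w)"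
    by (simp add: outer_self_mult_vector matrix_vector_mult_scaleR algebra_simps)
  have "trace Q - trace P = a * trace (Q ** outer w w ** P)"
    by (simp only: diff(2) trace_scaleR flip: trace_sub)
  also have "\<dots> = a * trace (P ** Q ** outer w w)"
    by (metis trace_mul_sym matrix_mul_assoc)
  also have "\<dots> = a * ((w v* P) \<bullet> (Q *v w))"
    by (simp only: trace_mult_outer_self dot_lmul_matrix matrix_vector_mul_assoc)
  also have "w v* P = P *v w"
    using transpose_matrix_inv_symmetric[OF M sym] vector_transpose_matrix[of w P]
    by (simp only: P_def)
  also have "(P *v w) \<bullet> (Q *v w) = (1 + a * (w \<bullet> (Q *v w))) * ((P *v w) \<bullet> (P *v w))"
    by (subst Qw) (rule inner_scaleR_right)
  finally show ?thesis by (simp only: mult.assoc)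
qed

lemma trace_matrix_inv_rank_one_downdate_ge:
  fixes M :: "real^'n^'n" and a :: real and w :: "real^'n"
  assumes "transpose M = M" "invertible M" "invertible (M - a *\<^sub>R outer w w)"
    and "\<And>x. x \<bullet> ((M - a *\<^sub>R outer w w) *v x) \<ge> 0" and "a \<ge> 0"
  shows "trace (matrix_inv M) \<le> trace (matrix_inv (M - a *\<^sub>R outer w w))"
proof -
  have "w \<bullet> (matrix_inv (M - a *\<^sub>R outer w w) *v w) \<ge> 0"
    using assms(3,4) by (rule inner_matrix_inv_nonneg)
  then have "a * (1 + a * (w \<bullet> (matrix_inv (M - a *\<^sub>R outer w w) *v w)))
      * ((matrix_inv M *v w) \<bullet> (matrix_inv M *v w)) \<ge> 0"
    using \<open>a \<ge> 0\<close> by simp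
  then show ?thesis
    using trace_matrix_inv_rank_one_downdate[OF assms(1-3)] by linarith
qed

definition kemeny_matrix :: "real \<Rightarrow> real^'n^'n \<Rightarrow> real^'n^'n" where
  "kemeny_matrix r B = (1 + r) *\<^sub>R mat 1
     - diagm (\<lambda>k. 1 / sqrt (deg B $ k)) ** B ** diagm (\<lambda>k. 1 / sqrt (deg B $ k))
     + (1 / (\<Sum>k\<in>UNIV. \<bar>deg B $ k\<bar>)) *\<^sub>R outer (\<chi> k. sqrt (deg B $ k)) (\<chi> k. sqrt (deg B $ k))"

lemma kemeny_reg_eq_trace_matrix_inv:
  "kemeny_reg r B = trace (matrix_inv (kemeny_matrix r B)) - 1 / (1 + r)"
  by (simp add: kemeny_reg_def kemeny_matrix_def Let_def)

lemma kemeny_matrix_entry: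
  "kemeny_matrix r B $ k $ l = (1 + r) * (if k = l then 1 else 0)
     - 1 / sqrt (deg B $ k) * B$k$l * (1 / sqrt (deg B $ l))
     + 1 / (\<Sum>k\<in>UNIV. \<bar>deg B $ k\<bar>) * (sqrt (deg B $ k) * sqrt (deg B $ l))"
  unfolding kemeny_matrix_def by (simp add: diagm_sandwich_entry outer_def mat_def del: One_nat_def)

lemma kemeny_matrix_symmetric:
  assumes "transpose B = B"
  shows "transpose (kemeny_matrix r B) = kemeny_matrix r B"
  by (auto simp: vec_eq_iff transpose_def kemeny_matrix_entry transpose_eq_self_entry[OF assms] mult_ac)

lemma normalized_adjacency_quadratic_le:
  fixes B :: "real^'n^'n"
  assumes sym: "transpose B = B" and nonneg: "\<And>k l. B$k$l \<ge> 0"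
    and deg_pos: "\<And>k. deg B $ k > 0"
  shows "x \<bullet> ((diagm (\<lambda>k. 1 / sqrt (deg B $ k)) ** B ** diagm (\<lambda>k. 1 / sqrt (deg B $ k))) *v x)
      \<le> x \<bullet> x"
proof -
  define y where "y k = x$k / sqrt (deg B $ k)" for k
  let ?S = "\<lambda>f. \<Sum>k\<in>UNIV. \<Sum>l\<in>UNIV. B$k$l * f k l"
  have quad: "x \<bullet> ((diagm (\<lambda>k. 1 / sqrt (deg B $ k)) ** B ** diagm (\<lambda>k. 1 / sqrt (deg B $ k))) *v x)
      = ?S (\<lambda>k l. y k * y l)"
    unfolding inner_matrix_vector_eq_double_sum diagm_sandwich_entry y_def
    by (simp add: field_simps)
  have "x$k * x$k = (\<Sum>l\<in>UNIV. B$k$l * (y k * y k))" for k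
  proof -
    have "(\<Sum>l\<in>UNIV. B$k$l * (y k * y k)) = deg B $ k * (y k * y k)"
      by (simp add: deg_def matrix_vector_mult_def sum_distrib_right)
    also have "\<dots> = x$k * x$k"
      using deg_pos[of k] unfolding y_def by (simp add: field_simps)
    finally show ?thesis by simp
  qed
  then have left: "x \<bullet> x = ?S (\<lambda>k l. y k * y k)"
    by (simp add: inner_vec_def)
  also have "\<dots> = ?S (\<lambda>k l. y l * y l)"
    by (subst sum.swap) (simp add: transpose_eq_self_entry[OF sym])
  finally have right: "x \<bullet> x = ?S (\<lambda>k l. y l * y l)" .
  \<comment> \<open>twice the gap between the two sides is \<open>\<Sum> b\<^sub>k\<^sub>l (y\<^sub>k - y\<^sub>l)\<^sup>2\<close>\<close>
  have "0 \<le> ?S (\<lambda>k l. (y k - y l)^2)"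
    by (intro sum_nonneg mult_nonneg_nonneg nonneg) auto
  also have "\<dots> = ?S (\<lambda>k l. y k * y k) + ?S (\<lambda>k l. y l * y l) - 2 * ?S (\<lambda>k l. y k * y l)"
    by (simp add: power2_eq_square algebra_simps sum.distrib sum_subtractf sum_distrib_left)
  finally show ?thesis using quad left right by linarith
qed

lemma kemeny_matrix_quadratic_ge:
  fixes B :: "real^'n^'n"
  assumes "transpose B = B" "\<And>k l. B$k$l \<ge> 0" "\<And>k. deg B $ k > 0"
  shows "x \<bullet> (kemeny_matrix r B *v x) \<ge> r * (x \<bullet> x)"
proof -
  let ?N = "diagm (\<lambda>k. 1 / sqrt (deg B $ k)) ** B ** diagm (\<lambda>k. 1 / sqrt (deg B $ k))"
  let ?s = "(\<chi> k. sqrt (deg B $ k)) :: real^'n"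
  let ?c = "1 / (\<Sum>k\<in>UNIV. \<bar>deg B $ k\<bar>)"
  have expand: "x \<bullet> (kemeny_matrix r B *v x) = (1 + r) * (x \<bullet> x) - x \<bullet> (?N *v x) + ?c * (?s \<bullet> x)^2"
    unfolding kemeny_matrix_def
    by (simp add: matrix_vector_mult_add_rdistrib matrix_vector_mult_diff_rdistrib
        outer_self_mult_vector inner_diff_right inner_add_right power2_eq_square inner_commute
        flip: scaleR_matrix_vector_assoc)
  have "x \<bullet> (?N *v x) \<le> x \<bullet> x"
    using assms by (rule normalized_adjacency_quadratic_le)
  moreover have "?c * (?s \<bullet> x)^2 \<ge> 0" by (simp add: sum_nonneg)
  ultimately show ?thesis unfolding expand by (simp only: distrib_right)
qed

lemma edge_removed_entry:
  "edge_removed A i j $ k $ l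
     = A$k$l + A$i$j * ((axis i 1 - axis j 1) $ k * (axis i 1 - axis j 1) $ l)"
  by (simp add: edge_removed_def outer_def Let_def)

lemma deg_edge_removed: "deg (edge_removed A i j) = deg A"
proof -
  have "(\<Sum>l\<in>UNIV. (axis i (1::real) - axis j 1) $ l) = 0"
    by (simp add: sum_subtractf axis_def)
  then show ?thesis
    unfolding deg_def vec_eq_iff
    by (simp add: matrix_vector_mult_def edge_removed_entry sum.distrib
        mult.assoc[symmetric] flip: sum_distrib_left del: vector_minus_component)
qed

lemma edge_removed_symmetric:
  assumes "transpose A = A"
  shows "transpose (edge_removed A i j) = edge_removed A i j"
  by (auto simp: vec_eq_iff transpose_def edge_removed_entry transpose_eq_self_entry[OF assms]
      mult.commute)

lemma edge_removed_nonneg: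
  assumes sym: "transpose A = A" and nonneg: "\<And>k l. A$k$l \<ge> 0"
  shows "edge_removed A i j $ k $ l \<ge> 0"
proof (cases "{k, l} = {i, j} \<and> i \<noteq> j")
  case True
  \<comment> \<open>the entry of the removed edge drops to \<open>a\<^sub>i\<^sub>j - a\<^sub>i\<^sub>j = 0\<close>\<close>
  then show ?thesis
    by (auto simp: edge_removed_entry axis_def doubleton_eq_iff transpose_eq_self_entry[OF sym])
next
  case False
  then have "(axis i (1::real) - axis j 1) $ k * (axis i 1 - axis j 1) $ l \<ge> 0"
    by (auto simp: axis_def doubleton_eq_iff)
  then show ?thesis
    unfolding edge_removed_entry using nonneg[of k l] nonneg[of i j] by simp
qed

lemma kemeny_matrix_edge_removed:
  "kemeny_matrix r (edge_removed A i j) = kemeny_matrix r A - A$i$j *\<^sub>R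
     outer (diagm (\<lambda>k. 1 / sqrt (deg A $ k)) *v (axis i 1 - axis j 1))
       (diagm (\<lambda>k. 1 / sqrt (deg A $ k)) *v (axis i 1 - axis j 1))"
  by (simp only: vec_eq_iff vector_minus_component vector_scaleR_component outer_def
      vec_lambda_beta diagm_mult_vector_component kemeny_matrix_entry deg_edge_removed
      edge_removed_entry)
    (simp add: algebra_simps)

theorem mainTheorem9:
  fixes A :: "real^'n^'n" and i j :: 'n and r :: real
  assumes "transpose A = A"
    and "\<And>k l. A $ k $ l \<ge> 0"
    and "\<And>k. deg A $ k > 0"
    and "i \<noteq> j"
    and "A $ i $ j > 0"
    and "r > 0"
  shows "centrality_reg r A i j \<ge> 0"
proof -
  define w where "w = diagm (\<lambda>k. 1 / sqrt (deg A $ k)) *v (axis i 1 - axis j 1)"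
  let ?M = "kemeny_matrix r A"
  have downdate: "kemeny_matrix r (edge_removed A i j) = ?M - A$i$j *\<^sub>R outer w w"
    unfolding w_def by (rule kemeny_matrix_edge_removed)
  have M_ge: "x \<bullet> (?M *v x) \<ge> r * (x \<bullet> x)" for x
    using assms(1-3) by (rule kemeny_matrix_quadratic_ge)
  have N_ge: "x \<bullet> ((?M - A$i$j *\<^sub>R outer w w) *v x) \<ge> r * (x \<bullet> x)" for x
    unfolding downdate[symmetric]
    using edge_removed_symmetric[OF assms(1)] edge_removed_nonneg[OF assms(1,2)]
      assms(3)[folded deg_edge_removed[of A i j]]
    by (rule kemeny_matrix_quadratic_ge)
  have "trace (matrix_inv ?M) \<le> trace (matrix_inv (?M - A$i$j *\<^sub>R outer w w))"
  proof (rule trace_matrix_inv_rank_one_downdate_ge)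
    show "transpose ?M = ?M" using assms(1) by (rule kemeny_matrix_symmetric)
    show "invertible ?M" using M_ge assms(6) by (rule invertible_if_quadratic_form_ge)
    show "invertible (?M - A$i$j *\<^sub>R outer w w)"
      using N_ge assms(6) by (rule invertible_if_quadratic_form_ge)
    show "x \<bullet> ((?M - A$i$j *\<^sub>R outer w w) *v x) \<ge> 0" for x
      using N_ge[of x] assms(6) by (smt (verit) inner_ge_zero mult_nonneg_nonneg)
    show "A$i$j \<ge> 0" using assms(2) .
  qed
  then show ?thesis
    by (simp add: centrality_reg_def kemeny_reg_eq_trace_matrix_inv downdate)
qed

end
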